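(* Let $v\in S$ be a point with at least one irrational coordinate, and suppose there is $m\ge1$ such that the tail $\mathbb{X}_{a_m},\mathbb{X}_{a_{m+1}},\dots$ of its itinerary has the property that its non-$\mathbb{A}$-type symbols alternate in type between $\mathbb{B}$ and $\mathbb{C}$ (starting with either type, or there are none). Then $G^{m-1}(v)$ lies in the union of the faces $\{z=0\}$ and $\{y=z\}$ of $S$.
   Context: Let $S = \{(x,y,z)\in\mathbb{R}^3 : 0\le z\le y\le x\le 1\}$. For integers $n\ge1$ define $\mathbb{A}_n = \{\frac1{n+1} < x \le \frac1n,\ 0\le z\le y\le 1-nx\}$, $\mathbb{B}_n = \{0\le z\le 1-nx < y \le x\}$, $\mathbb{C}_n = \{1-nx < z \le y \le x \le \frac1n\}$; together with $\{(0,0,0)\}$ they partition $S$. The 3-dimensional Gauss map $G:S\to S$ is $G(0,0,0)=(0,0,0)$, $G(x,y,z)=\left(\frac1x-n,\frac yx,\frac zx\right)$ on $\mathbb{A}_n$, $G(x,y,z)=\left(\frac{1-y}{x}-n+1,\frac{x-y+z}{x},\frac{x-y}{x}\right)$ on $\mathbb{B}_n$, $G(x,y,z)=\left(\frac{1-z}{x}-n+1,\frac{x-z}{x},\frac{y-z}{x}\right)$ on $\mathbb{C}_n$. For a point $v$ whose forward orbit never hits the origin, its itinerary is the sequence $\mathbb{X}_{a_1},\mathbb{X}_{a_2},\dots$ ($\mathbb{X}\in\{\mathbb{A},\mathbb{B},\mathbb{C}\}$) with $G^{k-1}(v)\in\mathbb{X}_{a_k}$; a symbol $\mathbb{X}_a$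 is "of type $\mathbb{X}$". *)

theory Defs
  imports Complex_Main
begin

type_synonym pt = "real \<times> real \<times> real"

definition simplexS :: "pt set" where
  "simplexS = {(x,y,z). 0 \<le> z \<and> z \<le> y \<and> y \<le> x \<and> x \<le> 1}"

definition regA :: "nat \<Rightarrow> pt set" where
  "regA n = {(x,y,z). 1 / real (n+1) < x \<and> x \<le> 1 / real n \<and>
                      0 \<le> z \<and> z \<le> y \<and> y \<le> 1 - real n * x}"

definition regB :: "nat \<Rightarrow> pt set" where
  "regB n = {(x,y,z). 0 \<le> z \<and> z \<le> 1 - real n * x \<and> 1 - real n * x < y \<and> y \<le> x}"

definition regC :: "nat \<Rightarrow> pt set" where
  "regC n = {(x,y,z). 1 - real n * x < z \<and> z \<le> y \<and> y \<le> x \<and> x \<le> 1 / real n}"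

text \<open>The 3-dimensional Gauss map. The index n is the unique n \<ge> 1 of the piece
  containing the point (the pieces partition S).\<close>
definition gaussG :: "pt \<Rightarrow> pt" where
  "gaussG p = (case p of (x,y,z) \<Rightarrow>
     if p = (0,0,0) then (0,0,0)
     else if \<exists>n\<ge>1. p \<in> regA n then
       (let n = (SOME n. n \<ge> 1 \<and> p \<in> regA n) in (1/x - real n, y/x, z/x))
     else if \<exists>n\<ge>1. p \<in> regB n then
       (let n = (SOME n. n \<ge> 1 \<and> p \<in> regB n) in
          ((1-y)/x - real n + 1, (x-y+z)/x, (x-y)/x))
     else if \<exists>n\<ge>1. p \<in> regC n then
       (let n = (SOME n. n \<ge> 1 \<and> p \<in> regC n) in
          ((1-z)/x - real n + 1, (x-z)/x, (y-z)/x))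
     else (0,0,0))"

datatype symtype = TypeA | TypeB | TypeC | TypeO

definition ptype :: "pt \<Rightarrow> symtype" where
  "ptype p = (if \<exists>n\<ge>1. p \<in> regA n then TypeA
              else if \<exists>n\<ge>1. p \<in> regB n then TypeB
              else if \<exists>n\<ge>1. p \<in> regC n then TypeC else TypeO)"

definition itin_type :: "pt \<Rightarrow> nat \<Rightarrow> symtype" where
  "itin_type v k = ptype ((gaussG ^^ (k - 1)) v)"

definition tail_alternates :: "pt \<Rightarrow> nat \<Rightarrow> bool" where
  "tail_alternates v m \<longleftrightarrow>
     (\<forall>k\<ge>m. itin_type v k \<in> {TypeA, TypeB, TypeC}) \<and>
     (\<forall>i j. m \<le> i \<and> i < j \<and> itin_type v i \<noteq> TypeA \<and> itin_type v j \<noteq> TypeA \<and>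
            (\<forall>l. i < l \<and> l < j \<longrightarrow> itin_type v l = TypeA)
            \<longrightarrow> itin_type v i \<noteq> itin_type v j)"

end

theory Submission imports Defs begin

text \<open>Suppose the point w = G^(m-1)(v) = (x, y, z) has z > 0 and y > z. Follow z while the
  next non-A symbol of the orbit is B, and y - z while it is C. An A-step divides both by x,
  and since they are at most 1 - x, the reciprocal of the followed quantity drops by at least 1;
  a B-step turns z into y' - z' = z/x, again dropping the reciprocal by 1; a C-step turns
  y - z into z' = (y - z)/x without increasing it. Alternation guarantees that the followed
  quantity is always the right one and that no two C-steps are adjacent, so the positive
  reciprocal drops by 1 every two steps, which is absurd.\<close>

lemma index_eq_nat_floor:
  fixes x :: real
  assumes "real n * x \<le> 1" "1 < (real n + 1) * x"
  shows "n = nat \<lfloor>1 / x\<rfloor>"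
proof -
  have "0 < x" using assms(2) by (smt (verit) of_nat_0_le_iff zero_less_mult_iff)
  then have "real n \<le> 1 / x" "1 / x < real n + 1" using assms by (simp_all add: field_simps)
  then have "\<lfloor>1 / x\<rfloor> = int n" by (simp add: floor_eq_iff)
  then show ?thesis by simp
qed

lemma pieces_index_bounds:
  assumes "(x, y, z) \<in> regA n \<union> regB n \<union> regC n"
  shows "real n * x \<le> 1" and "1 < (real n + 1) * x"
proof -
  have "n \<noteq> 0" if "(x, y, z) \<notin> regB n"
    using assms that by (cases "n = 0") (auto simp: regA_def regC_def)
  then show "real n * x \<le> 1" "1 < (real n + 1) * x"
    using assms by (auto simp: regA_def regB_def regC_def field_simps)
qed

lemma pieces_pos:
  assumes "(x, y, z) \<in> regA n \<union> regB n \<union> regC n"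
  shows "0 < x"
  using pieces_index_bounds(2)[OF assms] by (smt (verit) of_nat_0_le_iff zero_less_mult_iff)

lemma pieces_index:
  assumes "(x, y, z) \<in> regA n \<union> regB n \<union> regC n"
  shows "n = nat \<lfloor>1 / x\<rfloor>"
  using index_eq_nat_floor pieces_index_bounds[OF assms] by blast

lemma pieces_index_unique:
  assumes "p \<in> R n" "p \<in> R' k" "R \<in> {regA, regB, regC}" "R' \<in> {regA, regB, regC}"
  shows "k = n"
proof -
  obtain x y z where "p = (x, y, z)" by (cases p)
  with assms show ?thesis using pieces_index[of x y z n] pieces_index[of x y z k] by auto
qed

lemma regA_regB_disjoint: "p \<in> regA n \<Longrightarrow> p \<notin> regB k"
  using pieces_index_unique[of p regA n regB k] by (cases p) (auto simp: regA_def regB_def)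

lemma regA_regC_disjoint: "p \<in> regA n \<Longrightarrow> p \<notin> regC k"
  using pieces_index_unique[of p regA n regC k] by (cases p) (auto simp: regA_def regC_def)

lemma regB_regC_disjoint: "p \<in> regB n \<Longrightarrow> p \<notin> regC k"
  using pieces_index_unique[of p regB n regC k] by (cases p) (auto simp: regB_def regC_def)

lemma some_piece_index:
  assumes "n \<ge> 1" "p \<in> R n" "R \<in> {regA, regB, regC}"
  shows "(SOME k. k \<ge> 1 \<and> p \<in> R k) = n"
proof (rule some_equality)
  fix k assume "k \<ge> 1 \<and> p \<in> R k"
  then show "k = n" using pieces_index_unique[of p R n R k] assms(2,3) by blast
qed (use assms in simp)

lemma gaussG_regA:
  assumes "n \<ge> 1" "(x, y, z) \<in> regA n"
  shows "gaussG (x, y, z) = (1/x - real n, y/x, z/x)"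
proof -
  have "0 < x" using assms pieces_pos by blast
  then show ?thesis
    using assms some_piece_index[of n _ regA, OF assms] unfolding gaussG_def by (auto simp: Let_def)
qed

lemma gaussG_regB:
  assumes "n \<ge> 1" "(x, y, z) \<in> regB n"
  shows "gaussG (x, y, z) = ((1-y)/x - real n + 1, (x-y+z)/x, (x-y)/x)"
proof -
  have "0 < x" using assms pieces_pos by blast
  moreover have "\<not> (\<exists>k\<ge>1. (x, y, z) \<in> regA k)" using assms regA_regB_disjoint by blast
  ultimately show ?thesis
    using assms some_piece_index[of n _ regB, OF assms] unfolding gaussG_def by (auto simp: Let_def)
qed

lemma gaussG_regC:
  assumes "n \<ge> 1" "(x, y, z) \<in> regC n"
  shows "gaussG (x, y, z) = ((1-z)/x - real n + 1, (x-z)/x, (y-z)/x)"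
proof -
  have "0 < x" using assms pieces_pos by blast
  moreover have "\<not> (\<exists>k\<ge>1. (x, y, z) \<in> regA k)" using assms regA_regC_disjoint by blast
  moreover have "\<not> (\<exists>k\<ge>1. (x, y, z) \<in> regB k)" using assms regB_regC_disjoint by blast
  ultimately show ?thesis
    using assms some_piece_index[of n _ regC, OF assms] unfolding gaussG_def by (auto simp: Let_def)
qed

lemma ptype_TypeA_E:
  assumes "ptype p = TypeA" obtains n where "n \<ge> 1" "p \<in> regA n"
  using assms unfolding ptype_def by (auto split: if_splits)

lemma ptype_TypeB_E:
  assumes "ptype p = TypeB" obtains n where "n \<ge> 1" "p \<in> regB n"
  using assms unfolding ptype_def by (auto split: if_splits)

lemma ptype_TypeC_E:
  assumes "ptype p = TypeC" obtains n where "n \<ge> 1" "p \<in> regC n"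
  using assms unfolding ptype_def by (auto split: if_splits)

lemma ptype_not_TypeO:
  assumes "ptype (x, y, z) \<noteq> TypeO"
  shows "0 \<le> z \<and> z \<le> y"
proof -
  obtain n where n: "(x, y, z) \<in> regA n \<union> regB n \<union> regC n"
    using assms unfolding ptype_def by (auto split: if_splits)
  with pieces_index_bounds(1)[OF n] show ?thesis
    by (auto simp: regA_def regB_def regC_def)
qed

lemma divide_le_inverse_minus_one:
  fixes x q :: real
  assumes "0 < q" "q \<le> 1 - x"
  shows "x / q \<le> 1 / q - 1"
  using assms by (simp add: field_simps)

lemma gaussG_TypeA_recip_decrease:
  assumes "ptype (x, y, z) = TypeA" "gaussG (x, y, z) = (x', y', z')"
  shows "0 < z \<Longrightarrow> 0 < z' \<and> 1/z' \<le> 1/z - 1"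
    and "0 < y - z \<Longrightarrow> 0 < y' - z' \<and> 1/(y' - z') \<le> 1/(y - z) - 1"
proof -
  obtain n where n: "n \<ge> 1" "(x, y, z) \<in> regA n" using assms(1) by (rule ptype_TypeA_E)
  have x: "0 < x" using n pieces_pos by blast
  have "x \<le> real n * x" using n(1) x by simp
  then have q: "q \<le> 1 - x" if "q \<le> y" for q using n(2) that by (auto simp: regA_def)
  have z': "z' = z / x" and yz': "y' - z' = (y - z) / x"
    using assms(2) gaussG_regA[OF n] by (auto simp: diff_divide_distrib)
  show "0 < z \<Longrightarrow> 0 < z' \<and> 1/z' \<le> 1/z - 1"
    using divide_le_inverse_minus_one[of z x] q[of z] n(2) x z' by (auto simp: regA_def)
  show "0 < y - z \<Longrightarrow> 0 < y' - z' \<and> 1/(y' - z') \<le> 1/(y - z) - 1"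
    using divide_le_inverse_minus_one[of "y - z" x] q[of "y - z"] n(2) x yz' by (auto simp: regA_def)
qed

lemma gaussG_TypeB_recip_decrease:
  assumes "ptype (x, y, z) = TypeB" "gaussG (x, y, z) = (x', y', z')" "0 < z"
  shows "0 < y' - z' \<and> 1/(y' - z') \<le> 1/z - 1"
proof -
  obtain n where n: "n \<ge> 1" "(x, y, z) \<in> regB n" using assms(1) by (rule ptype_TypeB_E)
  have x: "0 < x" using n pieces_pos by blast
  have "x \<le> real n * x" using n(1) x by simp
  moreover have "z \<le> 1 - real n * x" using n(2) by (simp add: regB_def)
  ultimately have "z \<le> 1 - x" by linarith
  moreover have "y' - z' = z / x" using assms(2) gaussG_regB[OF n] x by (auto simp: field_simps)
  ultimately show ?thesis using divide_le_inverse_minus_one[of z x] assms(3) x by simp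
qed

lemma gaussG_TypeC_recip_le:
  assumes "ptype (x, y, z) = TypeC" "gaussG (x, y, z) = (x', y', z')" "0 < y - z"
  shows "0 < z' \<and> 1/z' \<le> 1/(y - z)"
proof -
  obtain n where n: "n \<ge> 1" "(x, y, z) \<in> regC n" using assms(1) by (rule ptype_TypeC_E)
  have x: "0 < x" using n pieces_pos by blast
  have "x \<le> real n * x" using n(1) x by simp
  then have "x \<le> 1" using pieces_index_bounds(1)[of x y z n] n(2) by simp
  moreover have "z' = (y - z) / x" using assms(2) gaussG_regC[OF n] by simp
  ultimately show ?thesis using assms(3) x by (simp add: divide_right_mono)
qed

locale alternating_orbit =
  fixes w :: pt
  assumes orbit_typed: "ptype ((gaussG ^^ t) w) \<noteq> TypeO"
    and orbit_alternates: "\<lbrakk>i < j; ptype ((gaussG ^^ i) w) \<noteq> TypeA; ptype ((gaussG ^^ j) w) \<noteq> TypeA;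
      \<forall>l. i < l \<and> l < j \<longrightarrow> ptype ((gaussG ^^ l) w) = TypeA\<rbrakk>
      \<Longrightarrow> ptype ((gaussG ^^ i) w) \<noteq> ptype ((gaussG ^^ j) w)"
begin

abbreviation orbit_type :: "nat \<Rightarrow> symtype" where
  "orbit_type t \<equiv> ptype ((gaussG ^^ t) w)"

definition next_nonA_neq :: "symtype \<Rightarrow> nat \<Rightarrow> bool" where
  "next_nonA_neq s t \<longleftrightarrow>
     (\<forall>j\<ge>t. (\<forall>l. t \<le> l \<and> l < j \<longrightarrow> orbit_type l = TypeA) \<longrightarrow> orbit_type j \<noteq> s)"

lemma next_nonA_neq_current: "next_nonA_neq s t \<Longrightarrow> orbit_type t \<noteq> s"
  unfolding next_nonA_neq_def by auto

lemma next_nonA_neq_Suc: "next_nonA_neq s t \<Longrightarrow> orbit_type t = TypeA \<Longrightarrow> next_nonA_neq s (Suc t)"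
  unfolding next_nonA_neq_def by (metis Suc_leD le_antisym not_less_eq_eq)

lemma next_nonA_neq_after:
  assumes "orbit_type t = s" "s \<noteq> TypeA"
  shows "next_nonA_neq s (Suc t)"
  unfolding next_nonA_neq_def
proof (intro allI impI notI)
  fix j assume j: "Suc t \<le> j" "\<forall>l. Suc t \<le> l \<and> l < j \<longrightarrow> orbit_type l = TypeA" "orbit_type j = s"
  then have "orbit_type t \<noteq> orbit_type j" using assms by (intro orbit_alternates) auto
  then show False using j assms by simp
qed

lemma next_nonA_neq_B_or_C: "next_nonA_neq TypeB t \<or> next_nonA_neq TypeC t"
proof (rule ccontr)
  assume "\<not> ?thesis"
  then obtain jB jC where
    jB: "jB \<ge> t" "\<forall>l. t \<le> l \<and> l < jB \<longrightarrow> orbit_type l = TypeA" "orbit_type jB = TypeB" and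
    jC: "jC \<ge> t" "\<forall>l. t \<le> l \<and> l < jC \<longrightarrow> orbit_type l = TypeA" "orbit_type jC = TypeC"
    unfolding next_nonA_neq_def by auto
  then show False by (metis linorder_neqE_nat symtype.distinct)
qed

definition z_bound :: "nat \<Rightarrow> real \<Rightarrow> bool" where
  "z_bound t r \<longleftrightarrow>
     (case (gaussG ^^ t) w of (x, y, z) \<Rightarrow> 0 < z \<and> 1/z \<le> r) \<and> next_nonA_neq TypeC t"

definition gap_bound :: "nat \<Rightarrow> real \<Rightarrow> bool" where
  "gap_bound t r \<longleftrightarrow>
     (case (gaussG ^^ t) w of (x, y, z) \<Rightarrow> 0 < y - z \<and> 1/(y - z) \<le> r) \<and> next_nonA_neq TypeB t"

definition orbit_bound :: "nat \<Rightarrow> real \<Rightarrow> bool" where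
  "orbit_bound t r \<longleftrightarrow> z_bound t r \<or> gap_bound t r"

lemma orbit_bound_mono: "orbit_bound t r \<Longrightarrow> r \<le> r' \<Longrightarrow> orbit_bound t r'"
  unfolding orbit_bound_def z_bound_def gap_bound_def by (auto split: prod.splits)

lemma orbit_bound_pos:
  assumes "orbit_bound t r"
  shows "0 < r"
proof -
  obtain x y z where "(gaussG ^^ t) w = (x, y, z)" by (cases "(gaussG ^^ t) w")
  then have "0 < z \<and> 1/z \<le> r \<or> 0 < y - z \<and> 1/(y - z) \<le> r"
    using assms unfolding orbit_bound_def z_bound_def gap_bound_def by auto
  then show ?thesis by (meson less_le_trans zero_less_divide_1_iff)
qed

lemma z_bound_Suc:
  assumes "z_bound t r"
  shows "orbit_bound (Suc t) (r - 1)"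
proof -
  obtain x y z where p: "(gaussG ^^ t) w = (x, y, z)" by (cases "(gaussG ^^ t) w")
  obtain x' y' z' where p': "gaussG (x, y, z) = (x', y', z')" by (cases "gaussG (x, y, z)")
  have orbit_Suc: "(gaussG ^^ Suc t) w = (x', y', z')" using p p' by simp
  have z: "0 < z" "1/z \<le> r" and next_neqC: "next_nonA_neq TypeC t"
    using assms p unfolding z_bound_def by auto
  consider "orbit_type t = TypeA" | "orbit_type t = TypeB"
    using orbit_typed[of t] next_nonA_neq_current[OF next_neqC] by (cases "orbit_type t") auto
  then show ?thesis
  proof cases
    case 1
    then have "0 < z' \<and> 1/z' \<le> 1/z - 1" using gaussG_TypeA_recip_decrease(1) p p' z by simp
    moreover have "next_nonA_neq TypeC (Suc t)" using next_nonA_neq_Suc next_neqC 1 by blast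
    ultimately show ?thesis using z orbit_Suc unfolding orbit_bound_def z_bound_def by auto
  next
    case 2
    then have "0 < y' - z' \<and> 1/(y' - z') \<le> 1/z - 1" using gaussG_TypeB_recip_decrease p p' z by simp
    moreover have "next_nonA_neq TypeB (Suc t)" using next_nonA_neq_after[OF 2] by simp
    ultimately show ?thesis using z orbit_Suc unfolding orbit_bound_def gap_bound_def by auto
  qed
qed

lemma gap_bound_Suc:
  assumes "gap_bound t r"
  shows "gap_bound (Suc t) (r - 1) \<or> z_bound (Suc t) r"
proof -
  obtain x y z where p: "(gaussG ^^ t) w = (x, y, z)" by (cases "(gaussG ^^ t) w")
  obtain x' y' z' where p': "gaussG (x, y, z) = (x', y', z')" by (cases "gaussG (x, y, z)")
  have orbit_Suc: "(gaussG ^^ Suc t) w = (x', y', z')" using p p' by simp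
  have gap: "0 < y - z" "1/(y - z) \<le> r" and next_neqB: "next_nonA_neq TypeB t"
    using assms p unfolding gap_bound_def by auto
  consider "orbit_type t = TypeA" | "orbit_type t = TypeC"
    using orbit_typed[of t] next_nonA_neq_current[OF next_neqB] by (cases "orbit_type t") auto
  then show ?thesis
  proof cases
    case 1
    then have "0 < y' - z' \<and> 1/(y' - z') \<le> 1/(y - z) - 1"
      using gaussG_TypeA_recip_decrease(2) p p' gap by simp
    moreover have "next_nonA_neq TypeB (Suc t)" using next_nonA_neq_Suc next_neqB 1 by blast
    ultimately show ?thesis using gap orbit_Suc unfolding gap_bound_def by auto
  next
    case 2
    then have "0 < z' \<and> 1/z' \<le> 1/(y - z)" using gaussG_TypeC_recip_le p p' gap by simp
    moreover have "next_nonA_neq TypeC (Suc t)" using next_nonA_neq_after[OF 2] by simp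
    ultimately show ?thesis using gap orbit_Suc unfolding z_bound_def by auto
  qed
qed

lemma orbit_bound_Suc: "orbit_bound t r \<Longrightarrow> orbit_bound (Suc t) r"
  using z_bound_Suc gap_bound_Suc orbit_bound_mono unfolding orbit_bound_def
  by (smt (verit, best))

lemma orbit_bound_Suc_Suc:
  assumes "orbit_bound t r"
  shows "orbit_bound (Suc (Suc t)) (r - 1)"
proof -
  consider "z_bound t r" | "gap_bound (Suc t) (r - 1)" | "z_bound (Suc t) r"
    using assms gap_bound_Suc unfolding orbit_bound_def by blast
  then show ?thesis
    using z_bound_Suc orbit_bound_Suc unfolding orbit_bound_def by cases blast+
qed

lemma orbit_bound_iterate: "orbit_bound 0 r \<Longrightarrow> orbit_bound (2 * N) (r - real N)"
proof (induction N)
  case (Suc N)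
  then have "orbit_bound (Suc (Suc (2 * N))) (r - real N - 1)" by (intro orbit_bound_Suc_Suc)
  then show ?case by (simp add: algebra_simps)
qed simp

theorem start_on_faces: "case w of (x, y, z) \<Rightarrow> z = 0 \<or> y = z"
proof (rule ccontr)
  obtain x y z where w: "w = (x, y, z)" by (cases w)
  assume "\<not> ?thesis"
  moreover have "0 \<le> z \<and> z \<le> y" using ptype_not_TypeO orbit_typed[of 0] w by simp
  ultimately have pos: "0 < z" "0 < y - z" using w by auto
  define r where "r = max (1/z) (1/(y - z))"
  have "orbit_bound 0 r"
    using next_nonA_neq_B_or_C[of 0] pos w
    unfolding r_def orbit_bound_def z_bound_def gap_bound_def by auto
  then have "0 < r - real N" for N by (rule orbit_bound_pos[OF orbit_bound_iterate])
  moreover obtain N :: nat where "r < real N" using reals_Archimedean2 by blast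
  ultimately show False by (smt (verit))
qed

end

lemma itin_type_shift:
  assumes "m \<ge> 1"
  shows "ptype ((gaussG ^^ t) ((gaussG ^^ (m - 1)) v)) = itin_type v (t + m)"
proof -
  have "t + m - 1 = t + (m - 1)" using assms by simp
  then show ?thesis by (simp add: itin_type_def funpow_add)
qed

lemma alternating_orbit_shift:
  assumes "m \<ge> 1" "tail_alternates v m"
  shows "alternating_orbit ((gaussG ^^ (m - 1)) v)"
proof
  note types = itin_type_shift[OF assms(1), where v = v]
  have typed: "itin_type v k \<in> {TypeA, TypeB, TypeC}" if "k \<ge> m" for k
    using assms(2) that unfolding tail_alternates_def by blast
  show "ptype ((gaussG ^^ t) ((gaussG ^^ (m - 1)) v)) \<noteq> TypeO" for t
    using typed[of "t + m"] types by auto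
  fix i j
  assume "i < j"
    and i: "ptype ((gaussG ^^ i) ((gaussG ^^ (m - 1)) v)) \<noteq> TypeA"
    and j: "ptype ((gaussG ^^ j) ((gaussG ^^ (m - 1)) v)) \<noteq> TypeA"
    and between: "\<forall>l. i < l \<and> l < j \<longrightarrow> ptype ((gaussG ^^ l) ((gaussG ^^ (m - 1)) v)) = TypeA"
  have "itin_type v l = TypeA" if "i + m < l" "l < j + m" for l
  proof -
    have "ptype ((gaussG ^^ (l - m)) ((gaussG ^^ (m - 1)) v)) = TypeA"
      using between that by (simp add: less_diff_conv less_diff_conv2)
    moreover have "l - m + m = l" using that by simp
    ultimately show ?thesis using types[of "l - m"] by simp
  qed
  then show "ptype ((gaussG ^^ i) ((gaussG ^^ (m - 1)) v)) \<noteq> ptype ((gaussG ^^ j) ((gaussG ^^ (m - 1)) v))"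
    using assms(2) \<open>i < j\<close> i j types unfolding tail_alternates_def by (metis le_add2 add_less_mono1)
qed

theorem mainTheorem17:
  fixes x y z :: real and m :: nat
  assumes "(x, y, z) \<in> simplexS"
    and "x \<notin> \<rat> \<or> y \<notin> \<rat> \<or> z \<notin> \<rat>"
    and "m \<ge> 1"
    and "tail_alternates (x, y, z) m"
  shows "case (gaussG ^^ (m - 1)) (x, y, z) of (x', y', z') \<Rightarrow> z' = 0 \<or> y' = z'"
  using alternating_orbit.start_on_faces[OF alternating_orbit_shift[OF assms(3,4)]] .

end
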